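(* Let $V$ be a $\mathbb{Z}$-graded vertex algebra such that $V=C_2(V)$, and let $W$ be an irreducible weak $V$-module. Then $W=\widetilde{C}_2(W)$.
   Context: A vertex algebra $(V,Y,\mathbf{1})$ has vertex operators $Y(v,z)=\sum_{n\in\mathbb{Z}}v_nz^{-n-1}$. A $\mathbb{Z}$-graded vertex algebra is a vertex algebra $V=\bigoplus_{n\in\mathbb{Z}}V_n$ with a conformal vector $\omega\in V_2$, $Y(\omega,z)=\sum_n L(n)z^{-n-2}$, whose modes satisfy the Virasoro relations with some central charge, such that $L(0)v=nv$ for $v\in V_n$ and $Y(L(-1)v,z)=\frac{d}{dz}Y(v,z)$. A weak $V$-module is a vector space $M$ with $Y_M(v,z)=\sum_n v_nz^{-n-1}\in(\mathrm{End}\,M)[[z,z^{-1}]]$ such that $u_nw=0$ for $n\gg0$, $Y_M(\mathbf{1},z)=\mathrm{id}_M$, and the Jacobi identity holds; it is irreducible if it has no weak submodules other than $0$ and itself. Define $C_2(V)=\mathrm{Span}_{\mathbb{C}}\{u_{-2}v\mid u,v\in V\}$ and, for a weak $V$-module $M$, $\widetilde{C}_2(M)=\mathrm{Span}_{\mathbb{C}}\{u_{-2}w\mid u\in V,\ w\in M\}$. $V$ (resp. $M$) is called $C_2$-cofinite if $V/C_2(V)$ (resp. $M/\widetilde{C}_2(M)$) is finite-dimensional. *)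

theory Defs
  imports Complex_Main
begin

text \<open>
  Vertex operators are encoded by their modes: Y u n w denotes u_n w,
  i.e. Y(u,z) = sum_n u_n z^(-n-1).
\<close>

definition fsum :: "(nat \<Rightarrow> 'b::comm_monoid_add) \<Rightarrow> 'b" where
  "fsum f = sum f {i. f i \<noteq> 0}"

text \<open>The Jacobi identity, written componentwise (Borcherds identity):
  for all m n l and u v in V, w in M,
  sum_i binom(m,i) (u_(l+i) v)_(m+n-i) w
   = sum_i (-1)^i binom(l,i) (u_(m+l-i) v_(n+i) w - (-1)^l v_(n+l-i) u_(m+i) w).\<close>
definition jacobi ::
  "(complex \<Rightarrow> 'm \<Rightarrow> 'm) \<Rightarrow> ('v \<Rightarrow> int \<Rightarrow> 'v \<Rightarrow> 'v) \<Rightarrow> ('v \<Rightarrow> int \<Rightarrow> 'm \<Rightarrow> 'm::ab_group_add) \<Rightarrow> bool" where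
  "jacobi smulM YV YM \<longleftrightarrow>
    (\<forall>u v w m n l.
      fsum (\<lambda>i::nat. smulM ((of_int m :: complex) gchoose i)
                        (YM (YV u (l + int i) v) (m + n - int i) w))
      = fsum (\<lambda>i::nat. smulM ((-1) ^ i * ((of_int l :: complex) gchoose i))
                        (YM u (m + l - int i) (YM v (n + int i) w)
                         - smulM ((-1) powi l) (YM v (n + l - int i) (YM u (m + int i) w)))))"

definition vertex_algebra ::
  "(complex \<Rightarrow> 'v \<Rightarrow> 'v::ab_group_add) \<Rightarrow> ('v \<Rightarrow> int \<Rightarrow> 'v \<Rightarrow> 'v) \<Rightarrow> 'v \<Rightarrow> bool" where
  "vertex_algebra smul Y vac \<longleftrightarrow>
     vector_space smul \<and>
     (\<forall>u n. Vector_Spaces.linear smul smul (Y u n)) \<and>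
     (\<forall>w n. Vector_Spaces.linear smul smul (\<lambda>u. Y u n w)) \<and>
     (\<forall>u v. \<exists>N. \<forall>n\<ge>N. Y u n v = 0) \<and>
     (\<forall>n w. Y vac n w = (if n = -1 then w else 0)) \<and>
     (\<forall>v n. n \<ge> 0 \<longrightarrow> Y v n vac = 0) \<and>
     (\<forall>v. Y v (-1) vac = v) \<and>
     jacobi smul Y Y"

definition graded_decomp :: "(complex \<Rightarrow> 'v \<Rightarrow> 'v::ab_group_add) \<Rightarrow> (int \<Rightarrow> 'v set) \<Rightarrow> bool" where
  "graded_decomp smul Vn \<longleftrightarrow>
     (\<forall>n. module.subspace smul (Vn n)) \<and>
     (\<forall>v. \<exists>!f. finite {n. f n \<noteq> 0} \<and> (\<forall>n. f n \<in> Vn n) \<and> v = sum f {n. f n \<noteq> 0})"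

text \<open>Z-graded vertex algebra with conformal vector omega in V_2,
  L(n) = omega_(n+1).\<close>
definition Z_graded_VA ::
  "(complex \<Rightarrow> 'v \<Rightarrow> 'v::ab_group_add) \<Rightarrow> ('v \<Rightarrow> int \<Rightarrow> 'v \<Rightarrow> 'v) \<Rightarrow> 'v \<Rightarrow> 'v \<Rightarrow> (int \<Rightarrow> 'v set) \<Rightarrow> bool" where
  "Z_graded_VA smul Y vac \<omega> Vn \<longleftrightarrow>
     vertex_algebra smul Y vac \<and>
     graded_decomp smul Vn \<and>
     \<omega> \<in> Vn 2 \<and>
     (\<exists>c::complex. \<forall>m n v.
        Y \<omega> (m + 1) (Y \<omega> (n + 1) v) - Y \<omega> (n + 1) (Y \<omega> (m + 1) v)
        = smul (of_int (m - n)) (Y \<omega> (m + n + 1) v)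
          + smul ((of_int (m ^ 3 - m) / 12) * (if m + n = 0 then 1 else 0) * c) v) \<and>
     (\<forall>n v. v \<in> Vn n \<longrightarrow> Y \<omega> 1 v = smul (of_int n) v) \<and>
     (\<forall>v n w. Y (Y \<omega> 0 v) n w = smul (- of_int n) (Y v (n - 1) w))"

definition weak_module ::
  "(complex \<Rightarrow> 'v \<Rightarrow> 'v::ab_group_add) \<Rightarrow> ('v \<Rightarrow> int \<Rightarrow> 'v \<Rightarrow> 'v) \<Rightarrow> 'v \<Rightarrow>
   (complex \<Rightarrow> 'm \<Rightarrow> 'm::ab_group_add) \<Rightarrow> ('v \<Rightarrow> int \<Rightarrow> 'm \<Rightarrow> 'm) \<Rightarrow> bool" where
  "weak_module smul Y vac smulM YM \<longleftrightarrow>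
     vector_space smulM \<and>
     (\<forall>u n. Vector_Spaces.linear smulM smulM (YM u n)) \<and>
     (\<forall>w n. Vector_Spaces.linear smul smulM (\<lambda>u. YM u n w)) \<and>
     (\<forall>u w. \<exists>N. \<forall>n\<ge>N. YM u n w = 0) \<and>
     (\<forall>n w. YM vac n w = (if n = -1 then w else 0)) \<and>
     jacobi smulM Y YM"

definition weak_submodule ::
  "(complex \<Rightarrow> 'm \<Rightarrow> 'm::ab_group_add) \<Rightarrow> ('v \<Rightarrow> int \<Rightarrow> 'm \<Rightarrow> 'm) \<Rightarrow> 'm set \<Rightarrow> bool" where
  "weak_submodule smulM YM N \<longleftrightarrow>
     module.subspace smulM N \<and> (\<forall>u n w. w \<in> N \<longrightarrow> YM u n w \<in> N)"

definition irreducible_weak_module ::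
  "(complex \<Rightarrow> 'v \<Rightarrow> 'v::ab_group_add) \<Rightarrow> ('v \<Rightarrow> int \<Rightarrow> 'v \<Rightarrow> 'v) \<Rightarrow> 'v \<Rightarrow>
   (complex \<Rightarrow> 'm \<Rightarrow> 'm::ab_group_add) \<Rightarrow> ('v \<Rightarrow> int \<Rightarrow> 'm \<Rightarrow> 'm) \<Rightarrow> bool" where
  "irreducible_weak_module smul Y vac smulM YM \<longleftrightarrow>
     weak_module smul Y vac smulM YM \<and>
     (\<forall>N. weak_submodule smulM YM N \<longrightarrow> N = {0} \<or> N = UNIV)"

definition C2 :: "(complex \<Rightarrow> 'v \<Rightarrow> 'v::ab_group_add) \<Rightarrow> ('v \<Rightarrow> int \<Rightarrow> 'v \<Rightarrow> 'v) \<Rightarrow> 'v set" where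
  "C2 smul Y = module.span smul {Y u (-2) v | u v. True}"

definition C2_tilde ::
  "(complex \<Rightarrow> 'm \<Rightarrow> 'm::ab_group_add) \<Rightarrow> ('v \<Rightarrow> int \<Rightarrow> 'm \<Rightarrow> 'm) \<Rightarrow> 'm set" where
  "C2_tilde smulM YM = module.span smulM {YM u (-2) w | u w. True}"

end

theory Submission
  imports Defs
begin

(* Write C for the span of all u_(-2) w in the module M.  Only two
   instances of the Jacobi identity (m = 0, l = -2) are needed:
   (1) with v the vacuum, (u_(-2) 1)_(-k) w = k u_(-k-1) w, so by induction every
       mode u_(-k) w with k >= 2 lies in C;
   (2) for arbitrary a, b, the element (a_(-2) b)_(-1) w is a finite combination
       of modes a_(-2-i) and b_(-3-i) applied to vectors of M, hence lies in C.
   Since u |-> u_(-1) w is linear, the set of u with u_(-1) w in C is a subspace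
   containing every a_(-2) b, hence containing C_2(V) = V, and in particular the
   vacuum; as 1_(-1) w = w, this gives w in C. *)

lemma fsum_single:
  assumes "\<And>i. i \<noteq> j \<Longrightarrow> f i = 0"
  shows "fsum f = f j"
proof (cases "f j = 0")
  case True
  have "f i = 0" for i using True assms by (cases "i = j") auto
  then have "{i. f i \<noteq> 0} = {}" by simp
  then show ?thesis using True by (simp add: fsum_def)
next
  case False
  then have "{i. f i \<noteq> 0} = {j}" using assms by auto
  then show ?thesis by (simp add: fsum_def)
qed

(* Subspaces are closed under fsum (an infinite support gives the value 0). *)
lemma fsum_in_subspace:
  assumes "module s" "module.subspace s S" "\<And>i. f i \<in> S"
  shows "fsum f \<in> S"
proof (cases "finite {i. f i \<noteq> 0}")
  case True
  then show ?thesis unfolding fsum_def by (intro module.subspace_sum[OF assms(1,2)] assms(3))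
next
  case False
  then show ?thesis unfolding fsum_def using module.subspace_0[OF assms(1,2)] by simp
qed

lemma signed_gbinomial_neg2: "(-1) ^ j * ((-2::complex) gchoose j) = of_nat (j + 1)"
proof -
  have "(-2::complex) gchoose j = (-1) ^ j * (of_nat (Suc j) gchoose j)"
    using gbinomial_minus[of "2::complex" j] by (simp add: add.commute)
  also have "(of_nat (Suc j) :: complex) gchoose j = of_nat (Suc j)"
    using binomial_gbinomial[of "Suc j" j, where 'a=complex] binomial_Suc_n[of j] by (simp only:)
  finally have "(-1) ^ j * ((-2::complex) gchoose j) = ((-1) ^ j * (-1) ^ j) * of_nat (Suc j)"
    by (simp add: mult.assoc)
  also have "(-1::complex) ^ j * (-1) ^ j = 1" by (simp flip: power_mult_distrib)
  finally show ?thesis by simp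
qed

lemma jacobi_product_neg2:
  assumes "module smulM" "jacobi smulM YV YM"
  shows "YM (YV u (-2) v) n w =
    fsum (\<lambda>i::nat. smulM (of_nat (i + 1))
            (YM u (-2 - int i) (YM v (n + int i) w) - YM v (n - 2 - int i) (YM u (int i) w)))"
proof -
  interpret module smulM by (rule assms(1))
  have "fsum (\<lambda>i::nat. smulM ((of_int 0 :: complex) gchoose i)
                        (YM (YV u (-2 + int i) v) (0 + n - int i) w))
      = fsum (\<lambda>i::nat. smulM ((-1) ^ i * ((of_int (-2) :: complex) gchoose i))
                        (YM u (0 + -2 - int i) (YM v (n + int i) w)
                         - smulM ((-1) powi (-2)) (YM v (n + -2 - int i) (YM u (0 + int i) w))))"
    using assms(2) unfolding jacobi_def by blast
  (* binom(0, i) vanishes for i > 0, so the left side is a single term. *)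
  moreover have "fsum (\<lambda>i::nat. smulM ((of_int 0 :: complex) gchoose i)
                        (YM (YV u (-2 + int i) v) (0 + n - int i) w)) = YM (YV u (-2) v) n w"
    by (subst fsum_single[where j=0]) (auto simp: gbinomial_0_left)
  (* On the right, (-1)^l = 1 and the binomial signs combine to i + 1. *)
  moreover have "(\<lambda>i::nat. smulM ((-1) ^ i * ((of_int (-2) :: complex) gchoose i))
                        (YM u (0 + -2 - int i) (YM v (n + int i) w)
                         - smulM ((-1) powi (-2)) (YM v (n + -2 - int i) (YM u (0 + int i) w))))
      = (\<lambda>i::nat. smulM (of_nat (i + 1))
            (YM u (-2 - int i) (YM v (n + int i) w) - YM v (n - 2 - int i) (YM u (int i) w)))"
    by (simp add: signed_gbinomial_neg2)
  ultimately show ?thesis by simp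
qed

lemma negative_modes_in_C2_tilde:
  assumes M: "weak_module smul Y vac smulM YM" and "k \<ge> 2"
  shows "YM u (- int k) w \<in> C2_tilde smulM YM"
proof -
  interpret vector_space smulM using M by (simp add: weak_module_def)
  have vac: "\<And>n w. YM vac n w = (if n = -1 then w else 0)"
    and J: "jacobi smulM Y YM" using M by (simp_all add: weak_module_def)
  have zero: "YM x n 0 = 0" for x n
    using M vector_space_axioms
    by (simp add: weak_module_def vector_space_pair.linear_0 vector_space_pair_def)
  show ?thesis
    using assms(2)
  proof (induction k arbitrary: u w rule: nat_induct_at_least)
    case base
    show ?case unfolding C2_tilde_def by (rule span_base) auto
  next
    case (Suc k)
    (* Only the term i = k - 1 survives when v is the vacuum. *)
    have "YM (Y u (-2) vac) (- int k) w = smulM (of_nat k) (YM u (- int (Suc k)) w)"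
      unfolding jacobi_product_neg2[OF module_axioms J]
    proof (subst fsum_single[where j="k - 1"])
      fix i :: nat assume "i \<noteq> k - 1"
      then show "smulM (of_nat (i + 1)) (YM u (-2 - int i) (YM vac (- int k + int i) w)
                   - YM vac (- int k - 2 - int i) (YM u (int i) w)) = 0"
        using Suc.hyps by (auto simp: vac zero)
    qed (use Suc.hyps in \<open>simp add: vac of_nat_diff\<close>)
    moreover have "YM (Y u (-2) vac) (- int k) w \<in> C2_tilde smulM YM" by (rule Suc.IH)
    ultimately have "smulM (of_nat k) (YM u (- int (Suc k)) w) \<in> C2_tilde smulM YM" by simp
    then have "smulM (inverse (of_nat k)) (smulM (of_nat k) (YM u (- int (Suc k)) w))
               \<in> C2_tilde smulM YM"
      unfolding C2_tilde_def by (rule span_scale)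
    moreover have "inverse (of_nat k :: complex) * of_nat k = 1" using Suc.hyps by simp
    ultimately show ?case by simp
  qed
qed

lemma C2_generator_mode_in_C2_tilde:
  assumes M: "weak_module smul Y vac smulM YM"
  shows "YM (Y a (-2) b) (-1) w \<in> C2_tilde smulM YM"
proof -
  interpret vector_space smulM using M by (simp add: weak_module_def)
  have J: "jacobi smulM Y YM" using M by (simp add: weak_module_def)
  have sub: "subspace (C2_tilde smulM YM)" unfolding C2_tilde_def by simp
  have modes: "YM a (-2 - int i) x \<in> C2_tilde smulM YM" "YM b (-1 - 2 - int i) x \<in> C2_tilde smulM YM"
    for i x
  proof -
    have a: "-2 - int i = - int (i + 2)" and b: "-1 - 2 - int i = - int (i + 3)" by simp_all
    show "YM a (-2 - int i) x \<in> C2_tilde smulM YM"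
      unfolding a by (rule negative_modes_in_C2_tilde[OF M]) simp
    show "YM b (-1 - 2 - int i) x \<in> C2_tilde smulM YM"
      unfolding b by (rule negative_modes_in_C2_tilde[OF M]) simp
  qed
  show ?thesis
    unfolding jacobi_product_neg2[OF module_axioms J]
    by (rule fsum_in_subspace[OF module_axioms sub], rule subspace_scale[OF sub],
        rule subspace_diff[OF sub modes])
qed

(* The vacuum lies in C_2(V) = V, so w = 1_(-1) w lies in C2_tilde(M). *)
theorem C2_tilde_eq_UNIV_if_C2_eq_UNIV:
  assumes V: "vector_space smul" and M: "weak_module smul Y vac smulM YM"
    and C2: "C2 smul Y = UNIV"
  shows "C2_tilde smulM YM = UNIV"
proof -
  interpret V: vector_space smul by (rule V)
  interpret M: vector_space smulM using M by (simp add: weak_module_def)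
  have vac: "YM vac (-1) w = w" for w using M by (simp add: weak_module_def)
  have "vac \<in> {x. YM x (-1) w \<in> C2_tilde smulM YM}" for w
  proof -
    (* Preimage of a subspace under the linear map x |-> x_(-1) w. *)
    have "V.subspace {x. YM x (-1) w \<in> C2_tilde smulM YM}"
      using vector_space_pair.linear_subspace_vimage[of smul smulM "\<lambda>x. YM x (-1) w"
              "C2_tilde smulM YM"] M
      by (simp add: vector_space_pair_def V M.vector_space_axioms weak_module_def
                    vimage_def C2_tilde_def)
    then have "C2 smul Y \<subseteq> {x. YM x (-1) w \<in> C2_tilde smulM YM}"
      unfolding C2_def by (rule V.span_minimal[rotated]) (auto intro: C2_generator_mode_in_C2_tilde[OF M])
    then show ?thesis using C2 by auto
  qed
  then show ?thesis using vac by auto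
qed

theorem proposition2p13:
  fixes smul :: "complex \<Rightarrow> 'v \<Rightarrow> 'v::ab_group_add"
    and Y :: "'v \<Rightarrow> int \<Rightarrow> 'v \<Rightarrow> 'v"
    and vac \<omega> :: 'v
    and Vn :: "int \<Rightarrow> 'v set"
    and smulM :: "complex \<Rightarrow> 'm \<Rightarrow> 'm::ab_group_add"
    and YM :: "'v \<Rightarrow> int \<Rightarrow> 'm \<Rightarrow> 'm"
  assumes "Z_graded_VA smul Y vac \<omega> Vn"
    and "C2 smul Y = UNIV"
    and "irreducible_weak_module smul Y vac smulM YM"
  shows "C2_tilde smulM YM = UNIV"
proof (rule C2_tilde_eq_UNIV_if_C2_eq_UNIV)
  show "vector_space smul"
    using assms(1) by (simp add: Z_graded_VA_def vertex_algebra_def)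
  show "weak_module smul Y vac smulM YM"
    using assms(3) by (simp add: irreducible_weak_module_def)
qed (rule assms(2))

end
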